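(* Let $k\ge 1$ be an integer and let $G$ be a bipartite graph with bipartition $V(G)=A\cup B$, $|A|=k$, $|B|=k+1$, such that every $v\in A$ has $\deg(v)\ge 1$ and $\deg(v)>\deg(u)$ for every $u\in N(v)$. Then $G=K_{k,k+1}$ (i.e., every vertex of $A$ is adjacent to every vertex of $B$).
   Context: Degrees and neighborhoods $N(v)$ are taken in $G$. *)

theory Defs
  imports Main
begin

definition simple_graph :: "'a set \<Rightarrow> ('a \<Rightarrow> 'a \<Rightarrow> bool) \<Rightarrow> bool" where
  "simple_graph V E \<longleftrightarrow> finite V \<and> (\<forall>u v. E u v \<longrightarrow> E v u) \<and> (\<forall>v. \<not> E v v)
     \<and> (\<forall>u v. E u v \<longrightarrow> u \<in> V \<and> v \<in> V)"

definition neighbours :: "'a set \<Rightarrow> ('a \<Rightarrow> 'a \<Rightarrow> bool) \<Rightarrow> 'a \<Rightarrow> 'a set" where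
  "neighbours V E v = {u \<in> V. E v u}"

definition degree :: "'a set \<Rightarrow> ('a \<Rightarrow> 'a \<Rightarrow> bool) \<Rightarrow> 'a \<Rightarrow> nat" where
  "degree V E v = card (neighbours V E v)"

definition bipartition :: "'a set \<Rightarrow> ('a \<Rightarrow> 'a \<Rightarrow> bool) \<Rightarrow> 'a set \<Rightarrow> 'a set \<Rightarrow> bool" where
  "bipartition V E A B \<longleftrightarrow> V = A \<union> B \<and> A \<inter> B = {}
     \<and> (\<forall>u v. E u v \<longrightarrow> (u \<in> A \<and> v \<in> B) \<or> (u \<in> B \<and> v \<in> A))"

end

theory Submission
  imports Defs Complex_Main
begin

text \<open>Give every edge \<open>ab\<close> (\<open>a \<in> A\<close>, \<open>b \<in> B\<close>) the weight \<open>1/d(b) - 1/d(a)\<close>.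
  Summed over all edges the terms \<open>1/d(b)\<close> contribute at most \<open>|B|\<close> and the terms
  \<open>1/d(a)\<close> exactly \<open>|A|\<close>, so the total weight is at most \<open>|B| - |A| = 1\<close>.  On the
  other hand \<open>1 \<le> d(b) \<le> d(a) - 1\<close> for each neighbour \<open>b\<close> of \<open>a\<close>, so the edges at
  \<open>a\<close> weigh at least \<open>1/(d(a) - 1) \<ge> 1/k\<close>, strictly more unless \<open>d(a) = k + 1\<close>.\<close>

lemma neighbours_bipartition_left:
  assumes "simple_graph V E" "bipartition V E A B" "a \<in> A"
  shows "neighbours V E a = {b \<in> B. E a b}"
  using assms unfolding simple_graph_def bipartition_def neighbours_def by blast

lemma neighbours_bipartition_right:
  assumes "simple_graph V E" "bipartition V E A B" "b \<in> B"
  shows "neighbours V E b = {a \<in> A. E a b}"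
  using assms unfolding simple_graph_def bipartition_def neighbours_def by blast

lemma sum_inverse_codegree_le_card:
  fixes R :: "'a \<Rightarrow> 'b \<Rightarrow> bool"
  assumes "finite A" "finite B"
  shows "(\<Sum>a\<in>A. \<Sum>b\<in>{b \<in> B. R a b}. 1 / real (card {a' \<in> A. R a' b})) \<le> real (card B)"
proof -
  have "(\<Sum>a\<in>A. \<Sum>b\<in>{b \<in> B. R a b}. 1 / real (card {a' \<in> A. R a' b}))
      = (\<Sum>b\<in>B. \<Sum>a\<in>{a \<in> A. R a b}. 1 / real (card {a' \<in> A. R a' b}))"
    by (rule sum.swap_restrict[OF assms])
  also have "\<dots> \<le> (\<Sum>b\<in>B. 1)"
    by (rule sum_mono) (simp add: card_eq_0_iff)
  finally show ?thesis by simp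
qed

lemma sum_inverse_diff_ge:
  fixes c :: "'b \<Rightarrow> nat"
  assumes "finite S" "\<forall>b\<in>S. 1 \<le> c b \<and> c b < card S"
  shows "1 / (real (card S) - 1) \<le> (\<Sum>b\<in>S. 1 / real (c b) - 1 / real (card S))"
proof (cases "S = {}")
  case False
  let ?d = "real (card S)"
  from False obtain b where "b \<in> S" by blast
  then have "?d \<ge> 2" using assms(2) by fastforce
  have "(\<Sum>b\<in>S. 1 / (?d - 1) - 1 / ?d) \<le> (\<Sum>b\<in>S. 1 / real (c b) - 1 / ?d)"
    using assms(2) by (intro sum_mono diff_right_mono divide_left_mono) auto
  moreover have "(\<Sum>b\<in>S. 1 / (?d - 1) - 1 / ?d) = 1 / (?d - 1)"
    using \<open>?d \<ge> 2\<close> by (simp add: field_simps)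
  ultimately show ?thesis by simp
qed simp

lemma complete_if_degrees_drop:
  fixes R :: "'a \<Rightarrow> 'b \<Rightarrow> bool"
  assumes fin: "finite A" "finite B" and card_B: "card B = card A + 1"
    and nonisolated: "\<forall>a\<in>A. \<exists>b\<in>B. R a b"
    and drop: "\<forall>a\<in>A. \<forall>b\<in>B. R a b \<longrightarrow> card {a' \<in> A. R a' b} < card {b' \<in> B. R a b'}"
  shows "\<forall>a\<in>A. \<forall>b\<in>B. R a b"
proof -
  define N where "N a = {b \<in> B. R a b}" for a
  define d where "d b = card {a \<in> A. R a b}" for b
  define w where "w a = (\<Sum>b\<in>N a. 1 / real (d b) - 1 / real (card (N a)))" for a
  let ?k = "card A"
  have fin_N: "finite (N a)" and N_sub: "N a \<subseteq> B" for a
    using fin by (auto simp: N_def)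
  have N_le: "card (N a) \<le> ?k + 1" for a
    using card_mono[OF fin(2) N_sub] card_B by simp
  have codegree_bounds: "1 \<le> d b \<and> d b < card (N a)" if a: "a \<in> A" and b: "b \<in> N a" for a b
  proof -
    have "a \<in> {a \<in> A. R a b}" using a b by (simp add: N_def)
    then have "d b \<noteq> 0" using fin(1) by (auto simp: d_def card_eq_0_iff)
    then show ?thesis using drop a b by (fastforce simp: N_def d_def)
  qed
  have N_ge_2: "2 \<le> card (N a)" if a: "a \<in> A" for a
  proof -
    obtain b where "b \<in> N a" using nonisolated a by (auto simp: N_def)
    then show ?thesis using codegree_bounds[OF a] by fastforce
  qed
  have w_ge: "1 / (real (card (N a)) - 1) \<le> w a" if a: "a \<in> A" for a
    unfolding w_def using codegree_bounds[OF a] by (intro sum_inverse_diff_ge fin_N) blast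
  have w_total: "(\<Sum>a\<in>A. w a) \<le> 1"
  proof -
    have "(\<Sum>a\<in>A. \<Sum>b\<in>N a. 1 / real (card (N a))) = (\<Sum>a\<in>A. 1)"
      using N_ge_2 by (intro sum.cong) fastforce+
    moreover have "(\<Sum>a\<in>A. \<Sum>b\<in>N a. 1 / real (d b)) \<le> real ?k + 1"
      using sum_inverse_codegree_le_card[OF fin, of R] card_B by (simp add: N_def d_def)
    ultimately show ?thesis by (simp add: w_def sum_subtractf)
  qed
  have w_ge_inverse_k: "1 / real ?k \<le> w a" if a: "a \<in> A" for a
  proof -
    have "1 / real ?k \<le> 1 / (real (card (N a)) - 1)"
      using N_le[of a] N_ge_2[OF a] by (intro divide_left_mono) auto
    then show ?thesis using w_ge[OF a] by linarith
  qed
  have N_full: "card (N a) = ?k + 1" if a: "a \<in> A" for a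
  proof (rule ccontr)
    assume "card (N a) \<noteq> ?k + 1"
    then have "1 / real ?k < 1 / (real (card (N a)) - 1)"
      using N_le[of a] N_ge_2[OF a] by (intro divide_strict_left_mono) auto
    then have "1 / real ?k < w a" using w_ge[OF a] by linarith
    then have "(\<Sum>x\<in>A. 1 / real ?k) < (\<Sum>x\<in>A. w x)"
      using a w_ge_inverse_k by (intro sum_strict_mono_ex1 fin(1)) blast+
    moreover have "(\<Sum>x\<in>A. 1 / real ?k) = 1"
      using a fin(1) by (auto simp: card_gt_0_iff)
    ultimately show False using w_total by linarith
  qed
  have "N a = B" if "a \<in> A" for a
    using card_subset_eq[OF fin(2) N_sub] N_full[OF that] card_B by simp
  then show ?thesis by (auto simp: N_def)
qed

theorem lemma3p3:
  fixes V A B :: "'a set" and E :: "'a \<Rightarrow> 'a \<Rightarrow> bool" and k :: nat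
  assumes "k \<ge> 1"
    and "simple_graph V E"
    and "bipartition V E A B"
    and "card A = k" and "card B = k + 1"
    and "\<forall>v\<in>A. degree V E v \<ge> 1"
    and "\<forall>v\<in>A. \<forall>u\<in>neighbours V E v. degree V E v > degree V E u"
  shows "\<forall>a\<in>A. \<forall>b\<in>B. E a b"
proof (rule complete_if_degrees_drop)
  have "finite V" using assms(2) by (simp add: simple_graph_def)
  then show "finite A" "finite B" using assms(3) by (auto simp: bipartition_def)
  show "card B = card A + 1" using assms(4,5) by simp
  have left: "degree V E a = card {b \<in> B. E a b}" if "a \<in> A" for a
    using neighbours_bipartition_left[OF assms(2,3) that] by (simp add: degree_def)
  have right: "degree V E b = card {a \<in> A. E a b}" if "b \<in> B" for b
    using neighbours_bipartition_right[OF assms(2,3) that] by (simp add: degree_def)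
  show "\<forall>a\<in>A. \<exists>b\<in>B. E a b"
  proof
    fix a assume "a \<in> A"
    then have "card {b \<in> B. E a b} \<noteq> 0" using assms(6) left by fastforce
    then have "{b \<in> B. E a b} \<noteq> {}" by force
    then show "\<exists>b\<in>B. E a b" by blast
  qed
  show "\<forall>a\<in>A. \<forall>b\<in>B. E a b \<longrightarrow> card {a' \<in> A. E a' b} < card {b' \<in> B. E a b'}"
    using assms(7) left right neighbours_bipartition_left[OF assms(2,3)] by fastforce
qed

end
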